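(* Let $k \ge 1$. For every instance $(d,\mathcal{C},k)$ of $k$-center and every execution of the reverse greedy algorithm on it (with any tie-breaking), the returned set $F_{n-k}$ satisfies $\mathrm{cost}(F_{n-k}) \le 2k\cdot \mathrm{OPT}$. Conversely, for every $k$ there exists an instance of $k$-center and an execution of reverse greedy on it (for some valid choice of tie-breaking) whose returned solution has cost $(2k-2)\cdot\mathrm{OPT}$. That is, reverse greedy is between a $(2k-2)$-approximation and a $2k$-approximation for $k$-center.
   Context: An instance of $k$-center consists of a finite metric space $(d,\mathcal{C})$ with $|\mathcal{C}| = n$ and an integer $k\in\mathbb{N}$ with $k\le n$. Every point of $\mathcal{C}$ is both a client and a potential facility. For $c\in\mathcal{C}$ and nonempty $F\subseteq\mathcal{C}$, $d(c,F):=\min_{f\in F} d(c,f)$, and $\mathrm{cost}(F):=\max_{c\in\mathcal{C}} d(c,F)$. $\mathrm{OPT}$ is the minimum of $\mathrm{cost}(F)$ over all $F\subseteq\mathcal{C}$ with $|F|\le k$. The reverse greedy algorithm sets $F_0:=\mathcal{C}$ and, for $i=1,\dots,n-k$, chooses $f_i\in\arg\min_{f\in F_{i-1}}\mathrm{cost}(F_{i-1}\setminus\{f\})$ (ties broken arbitrarily) and sets $F_i:=F_{i-1}\setminus\{f_i\}$; it returns $F_{n-k}$. An execution is any run of this algorithm corresponding to some choice of tie-breaking. *)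

theory Defs
  imports Main "HOL.Real"
begin

definition metric_on :: "'a set \<Rightarrow> ('a \<Rightarrow> 'a \<Rightarrow> real) \<Rightarrow> bool" where
  "metric_on C d \<longleftrightarrow>
     (\<forall>x\<in>C. \<forall>y\<in>C. d x y \<ge> 0 \<and> (d x y = 0 \<longleftrightarrow> x = y) \<and> d x y = d y x) \<and>
     (\<forall>x\<in>C. \<forall>y\<in>C. \<forall>z\<in>C. d x z \<le> d x y + d y z)"

definition dist_to :: "('a \<Rightarrow> 'a \<Rightarrow> real) \<Rightarrow> 'a set \<Rightarrow> 'a \<Rightarrow> real" where
  "dist_to d F c = Min ((\<lambda>f. d c f) ` F)"

definition kc_cost :: "'a set \<Rightarrow> ('a \<Rightarrow> 'a \<Rightarrow> real) \<Rightarrow> 'a set \<Rightarrow> real" where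
  "kc_cost C d F = Max ((dist_to d F) ` C)"

definition kc_OPT :: "'a set \<Rightarrow> ('a \<Rightarrow> 'a \<Rightarrow> real) \<Rightarrow> nat \<Rightarrow> real" where
  "kc_OPT C d k = Min {kc_cost C d F | F. F \<subseteq> C \<and> F \<noteq> {} \<and> card F \<le> k}"

text \<open>Fs is an execution of reverse greedy: Fs 0 = C and, for i < n - k,
  Fs (i+1) = Fs i - {f} for some f in Fs i minimising cost(Fs i - {f}).
  The returned set is Fs (card C - k).\<close>
definition rev_greedy_exec :: "'a set \<Rightarrow> ('a \<Rightarrow> 'a \<Rightarrow> real) \<Rightarrow> nat \<Rightarrow> (nat \<Rightarrow> 'a set) \<Rightarrow> bool" where
  "rev_greedy_exec C d k Fs \<longleftrightarrow>
     Fs 0 = C \<and>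
     (\<forall>i < card C - k. \<exists>f \<in> Fs i. Fs (Suc i) = Fs i - {f} \<and>
        (\<forall>g \<in> Fs i. kc_cost C d (Fs i - {f}) \<le> kc_cost C d (Fs i - {g})))"

end

theory Submission
  imports Defs "HOL-Library.Nat_Bijection"
begin

(* Upper bound: let Opt be an optimal solution, r = OPT, and let pi map every point to a nearest
   point of Opt, so that d c (pi c) <= r.  Moving the facilities of any F along pi changes the cost
   by at most r in either direction.  While more than k facilities remain, pi is not injective on
   the current set F, so some facility can be deleted without changing pi ` F; the greedy deletion
   is no worse and therefore costs at most cost (pi ` F) + r.  Hence cost (pi ` F) grows by at most
   2r whenever |pi ` F| drops, which gives cost (pi ` F_t) <= r + 2r (k - |pi ` F_t|) throughout,
   and finally cost F_(n-k) <= cost (pi ` F_(n-k)) + r <= 2kr.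

   Lower bound: for k = m + 2 we use m + 1 clusters (see cluster_dist) whose centers form an
   optimal solution of cost 1, while reverse greedy may end up with far-away points of a single
   cluster, at cost 2k - 2. *)

section \<open>Distances, costs and the optimum\<close>

lemma metric_on_nonneg: "metric_on C d \<Longrightarrow> x \<in> C \<Longrightarrow> y \<in> C \<Longrightarrow> 0 \<le> d x y"
  unfolding metric_on_def by blast

lemma metric_on_self: "metric_on C d \<Longrightarrow> x \<in> C \<Longrightarrow> d x x = 0"
  unfolding metric_on_def by blast

lemma metric_on_commute: "metric_on C d \<Longrightarrow> x \<in> C \<Longrightarrow> y \<in> C \<Longrightarrow> d x y = d y x"
  unfolding metric_on_def by blast

lemma metric_on_triangle:
  "metric_on C d \<Longrightarrow> x \<in> C \<Longrightarrow> y \<in> C \<Longrightarrow> z \<in> C \<Longrightarrow> d x z \<le> d x y + d y z"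
  unfolding metric_on_def by blast

lemma dist_to_le:
  assumes "finite F" "f \<in> F"
  shows "dist_to d F c \<le> d c f"
  using assms unfolding dist_to_def by simp

lemma dist_to_attained:
  assumes "finite F" "F \<noteq> {}"
  obtains f where "f \<in> F" "dist_to d F c = d c f"
proof -
  have "Min ((\<lambda>f. d c f) ` F) \<in> (\<lambda>f. d c f) ` F"
    using assms by (intro Min_in) auto
  then show ?thesis using that unfolding dist_to_def by auto
qed

lemma dist_to_ge:
  assumes "finite F" "F \<noteq> {}" "\<And>f. f \<in> F \<Longrightarrow> v \<le> d c f"
  shows "v \<le> dist_to d F c"
  using assms by (metis dist_to_attained)

lemma dist_to_le_kc_cost:
  assumes "finite C" "c \<in> C"
  shows "dist_to d F c \<le> kc_cost C d F"
  using assms unfolding kc_cost_def by simp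

lemma kc_cost_le:
  assumes "finite C" "C \<noteq> {}" "\<And>c. c \<in> C \<Longrightarrow> dist_to d F c \<le> v"
  shows "kc_cost C d F \<le> v"
  using assms unfolding kc_cost_def by simp

lemma kc_cost_leI:
  assumes "finite C" "C \<noteq> {}" "finite F" "\<And>c. c \<in> C \<Longrightarrow> \<exists>f\<in>F. d c f \<le> v"
  shows "kc_cost C d F \<le> v"
proof (rule kc_cost_le[OF assms(1,2)])
  fix c assume "c \<in> C"
  then obtain f where "f \<in> F" "d c f \<le> v" using assms(4) by blast
  then show "dist_to d F c \<le> v" using dist_to_le[OF assms(3), of f d c] by linarith
qed

lemma kc_cost_geI:
  assumes "finite C" "c \<in> C" "finite F" "F \<noteq> {}" "\<And>f. f \<in> F \<Longrightarrow> v \<le> d c f"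
  shows "v \<le> kc_cost C d F"
  using dist_to_ge[of F v d c, OF assms(3-5)] dist_to_le_kc_cost[OF assms(1,2), of d F] by linarith

lemma kc_OPT_candidates_finite:
  assumes "finite C"
  shows "finite {kc_cost C d F | F. F \<subseteq> C \<and> F \<noteq> {} \<and> card F \<le> k}"
proof -
  have "{kc_cost C d F | F. F \<subseteq> C \<and> F \<noteq> {} \<and> card F \<le> k} \<subseteq> kc_cost C d ` Pow C"
    by auto
  then show ?thesis using assms finite_subset by blast
qed

lemma kc_OPT_le:
  assumes "finite C" "F \<subseteq> C" "F \<noteq> {}" "card F \<le> k"
  shows "kc_OPT C d k \<le> kc_cost C d F"
  unfolding kc_OPT_def using assms kc_OPT_candidates_finite[OF assms(1)] by (intro Min_le) auto

lemma kc_OPT_attained: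
  assumes "finite C" "C \<noteq> {}" "1 \<le> k"
  obtains Opt where "Opt \<subseteq> C" "Opt \<noteq> {}" "card Opt \<le> k" "kc_OPT C d k = kc_cost C d Opt"
proof -
  obtain c where "c \<in> C" using assms(2) by blast
  then have "kc_cost C d {c} \<in> {kc_cost C d F | F. F \<subseteq> C \<and> F \<noteq> {} \<and> card F \<le> k}"
    using assms(3) by force
  then have "kc_OPT C d k \<in> {kc_cost C d F | F. F \<subseteq> C \<and> F \<noteq> {} \<and> card F \<le> k}"
    unfolding kc_OPT_def using kc_OPT_candidates_finite[OF assms(1)] by (intro Min_in) auto
  then show ?thesis using that by blast
qed

lemma kc_OPT_ge_separation:
  assumes "finite C" "1 \<le> k" "k < card C"
    and sep: "\<And>x y. x \<in> C \<Longrightarrow> y \<in> C \<Longrightarrow> x \<noteq> y \<Longrightarrow> \<delta> \<le> d x y"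
  shows "\<delta> \<le> kc_OPT C d k"
proof -
  have "C \<noteq> {}" using assms(3) by auto
  then obtain Opt where Opt: "Opt \<subseteq> C" "Opt \<noteq> {}" "card Opt \<le> k" "kc_OPT C d k = kc_cost C d Opt"
    using kc_OPT_attained[OF assms(1) _ assms(2)] by blast
  have fin: "finite Opt" using Opt(1) assms(1) finite_subset by blast
  have "\<not> C \<subseteq> Opt"
  proof
    assume "C \<subseteq> Opt"
    then have "card C \<le> card Opt" by (rule card_mono[OF fin])
    then show False using Opt(3) assms(3) by linarith
  qed
  then obtain c where c: "c \<in> C" "c \<notin> Opt" by blast
  then have "\<delta> \<le> d c x" if "x \<in> Opt" for x using sep[of c x] that Opt(1) by blast
  then have "\<delta> \<le> kc_cost C d Opt" using kc_cost_geI[OF assms(1) c(1) fin Opt(2)] by blast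
  then show ?thesis using Opt(4) by simp
qed

section \<open>Reverse greedy steps and the upper bound\<close>

definition greedy_step :: "'a set \<Rightarrow> ('a \<Rightarrow> 'a \<Rightarrow> real) \<Rightarrow> 'a set \<Rightarrow> 'a set \<Rightarrow> bool" where
  "greedy_step C d F F' \<longleftrightarrow>
     (\<exists>f\<in>F. F' = F - {f} \<and> (\<forall>g\<in>F. kc_cost C d (F - {f}) \<le> kc_cost C d (F - {g})))"

lemma rev_greedy_exec_iff:
  "rev_greedy_exec C d k Fs \<longleftrightarrow>
     Fs 0 = C \<and> (\<forall>i < card C - k. greedy_step C d (Fs i) (Fs (Suc i)))"
  unfolding rev_greedy_exec_def greedy_step_def ..

lemma greedy_stepI:
  assumes "finite C" "F \<subseteq> C" "f \<in> F"
    and cover: "\<And>c. c \<in> C \<Longrightarrow> \<exists>x\<in>F - {f}. d c x \<le> v"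
    and far: "\<And>g. g \<in> F \<Longrightarrow> g \<noteq> f \<Longrightarrow> \<exists>c\<in>C. \<forall>x\<in>F - {g}. v \<le> d c x"
  shows "greedy_step C d F (F - {f})"
  unfolding greedy_step_def
proof (intro bexI[of _ f] conjI ballI)
  have fin: "finite F" using assms(1,2) finite_subset by blast
  have "C \<noteq> {}" using assms(2,3) by blast
  then have le: "kc_cost C d (F - {f}) \<le> v" using kc_cost_leI assms(1) fin cover by blast
  fix g assume "g \<in> F"
  show "kc_cost C d (F - {f}) \<le> kc_cost C d (F - {g})"
  proof (cases "g = f")
    case False
    then obtain c where "c \<in> C" "\<forall>x\<in>F - {g}. v \<le> d c x" using far \<open>g \<in> F\<close> by blast
    moreover have "F - {g} \<noteq> {}" using False assms(3) by blast
    ultimately have "v \<le> kc_cost C d (F - {g})" using kc_cost_geI[OF assms(1)] fin by blast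
    then show ?thesis using le by linarith
  qed simp
qed (simp_all add: assms(3))

lemma rev_greedy_exec_subset_card:
  assumes "finite C" "rev_greedy_exec C d k Fs" "t \<le> card C - k"
  shows "Fs t \<subseteq> C \<and> card (Fs t) = card C - t"
  using assms(3)
proof (induction t)
  case 0
  then show ?case using assms(2) by (simp add: rev_greedy_exec_iff)
next
  case (Suc t)
  then have "t < card C - k" by simp
  then obtain f where "f \<in> Fs t" "Fs (Suc t) = Fs t - {f}"
    using assms(2) unfolding rev_greedy_exec_def by blast
  moreover have "finite (Fs t)" using Suc assms(1) finite_subset by auto
  ultimately show ?case using Suc by auto
qed

lemma not_inj_on_image_Diff_singleton:
  assumes "\<not> inj_on h A"
  obtains a where "a \<in> A" "h ` (A - {a}) = h ` A"
proof -
  obtain a b where "a \<in> A" "b \<in> A" "a \<noteq> b" "h a = h b"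
    using assms unfolding inj_on_def by blast
  then have "h ` (A - {a}) = h ` A" by (auto intro: rev_image_eqI)
  then show ?thesis using that \<open>a \<in> A\<close> by blast
qed

context
  fixes C :: "'a set" and d :: "'a \<Rightarrow> 'a \<Rightarrow> real" and \<pi> :: "'a \<Rightarrow> 'a" and r :: real
  assumes finite: "finite C" and metric: "metric_on C d"
    and \<pi>_into: "\<And>c. c \<in> C \<Longrightarrow> \<pi> c \<in> C"
    and \<pi>_close: "\<And>c. c \<in> C \<Longrightarrow> d c (\<pi> c) \<le> r"
begin

lemma radius_nonneg:
  assumes "C \<noteq> {}"
  shows "0 \<le> r"
proof -
  obtain c where c: "c \<in> C" using assms by blast
  then show ?thesis using metric_on_nonneg[OF metric c \<pi>_into[OF c]] \<pi>_close[OF c] by linarith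
qed

lemma kc_cost_le_kc_cost_image:
  assumes F: "F \<subseteq> C" "F \<noteq> {}"
  shows "kc_cost C d F \<le> kc_cost C d (\<pi> ` F) + r"
proof (rule kc_cost_le[OF finite])
  show "C \<noteq> {}" using F by blast
  have fin: "finite F" using F finite finite_subset by blast
  fix c assume c: "c \<in> C"
  obtain q where q: "q \<in> F" "dist_to d (\<pi> ` F) c = d c (\<pi> q)"
    using dist_to_attained[of "\<pi> ` F" d c] fin F(2) by auto
  have qC: "q \<in> C" using q F by auto
  have "dist_to d F c \<le> d c q" using dist_to_le[OF fin q(1)] .
  also have "\<dots> \<le> d c (\<pi> q) + d (\<pi> q) q" using metric_on_triangle[OF metric c \<pi>_into[OF qC] qC] .
  also have "\<dots> \<le> dist_to d (\<pi> ` F) c + r"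
    using q \<pi>_close[OF qC] metric_on_commute[OF metric qC \<pi>_into[OF qC]] by simp
  also have "\<dots> \<le> kc_cost C d (\<pi> ` F) + r" using dist_to_le_kc_cost[OF finite c] by simp
  finally show "dist_to d F c \<le> kc_cost C d (\<pi> ` F) + r" .
qed

lemma kc_cost_image_le_kc_cost:
  assumes F: "F \<subseteq> C" "F \<noteq> {}"
  shows "kc_cost C d (\<pi> ` F) \<le> kc_cost C d F + r"
proof (rule kc_cost_le[OF finite])
  show "C \<noteq> {}" using F by blast
  have fin: "finite F" using F finite finite_subset by blast
  fix c assume c: "c \<in> C"
  obtain q where q: "q \<in> F" "dist_to d F c = d c q"
    using dist_to_attained[of F d c] fin F(2) by auto
  have qC: "q \<in> C" using q F by auto
  have "dist_to d (\<pi> ` F) c \<le> d c (\<pi> q)" using dist_to_le[of "\<pi> ` F" "\<pi> q"] fin q by simp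
  also have "\<dots> \<le> d c q + d q (\<pi> q)" using metric_on_triangle[OF metric c qC \<pi>_into[OF qC]] .
  also have "\<dots> \<le> dist_to d F c + r" using q \<pi>_close[OF qC] by simp
  also have "\<dots> \<le> kc_cost C d F + r" using dist_to_le_kc_cost[OF finite c] by simp
  finally show "dist_to d (\<pi> ` F) c \<le> kc_cost C d F + r" .
qed

lemma greedy_step_kc_cost_le:
  assumes step: "greedy_step C d F F'" and F: "F \<subseteq> C" "card (\<pi> ` F) < card F"
  shows "kc_cost C d F' \<le> kc_cost C d (\<pi> ` F) + r"
proof -
  obtain f where f: "F' = F - {f}" "\<And>g. g \<in> F \<Longrightarrow> kc_cost C d (F - {f}) \<le> kc_cost C d (F - {g})"
    using step unfolding greedy_step_def by blast
  have "\<not> inj_on \<pi> F" using F(2) card_image by force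
  then obtain g where g: "g \<in> F" "\<pi> ` (F - {g}) = \<pi> ` F"
    by (rule not_inj_on_image_Diff_singleton)
  have "F - {g} \<noteq> {}" using g F(2) by auto
  then have "kc_cost C d (F - {g}) \<le> kc_cost C d (\<pi> ` F) + r"
    using kc_cost_le_kc_cost_image[of "F - {g}"] F(1) g(2) by auto
  then show ?thesis using f g(1) by fastforce
qed

lemma rev_greedy_kc_cost_image_bound:
  assumes exec: "rev_greedy_exec C d k Fs" and k: "1 \<le> k" "k \<le> card C"
    and card_\<pi>: "card (\<pi> ` C) \<le> k" and t: "t \<le> card C - k"
  shows "kc_cost C d (\<pi> ` Fs t) \<le> r + 2 * r * (real k - real (card (\<pi> ` Fs t)))"
  using t
proof (induction t)
  case 0
  have "C \<noteq> {}" using k by auto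
  then have r: "0 \<le> r" by (rule radius_nonneg)
  have "kc_cost C d C \<le> 0"
    using metric_on_self[OF metric] finite \<open>C \<noteq> {}\<close> by (intro kc_cost_leI) force+
  then have "kc_cost C d (\<pi> ` C) \<le> r"
    using kc_cost_image_le_kc_cost[of C] \<open>C \<noteq> {}\<close> by simp
  moreover have "0 \<le> 2 * r * (real k - real (card (\<pi> ` C)))" using r card_\<pi> by simp
  ultimately show ?case using exec by (simp add: rev_greedy_exec_iff)
next
  case (Suc t)
  then have t: "t < card C - k" by simp
  have Ft: "Fs t \<subseteq> C" "card (Fs t) = card C - t"
    using rev_greedy_exec_subset_card[OF finite exec] t by auto
  have Ft': "Fs (Suc t) \<subseteq> C" "card (Fs (Suc t)) = card C - Suc t"
    using rev_greedy_exec_subset_card[OF finite exec Suc.prems] by auto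
  have step: "greedy_step C d (Fs t) (Fs (Suc t))" using exec t by (simp add: rev_greedy_exec_iff)
  then have "Fs (Suc t) \<subseteq> Fs t" unfolding greedy_step_def by blast
  then have sub: "\<pi> ` Fs (Suc t) \<subseteq> \<pi> ` Fs t" by blast
  have fin: "finite (Fs t)" using Ft(1) finite finite_subset by blast
  have "card (\<pi> ` Fs t) \<le> card (\<pi> ` C)" using Ft(1) finite by (intro card_mono) auto
  then have lt: "card (\<pi> ` Fs t) < card (Fs t)" using card_\<pi> Ft(2) t by linarith
  have r: "0 \<le> r" using radius_nonneg k by fastforce
  show ?case
  proof (cases "\<pi> ` Fs (Suc t) = \<pi> ` Fs t")
    case True
    then show ?thesis using Suc.IH t by simp
  next
    case False
    then have "card (\<pi> ` Fs (Suc t)) < card (\<pi> ` Fs t)"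
      using sub fin by (intro psubset_card_mono) auto
    then have card_drop: "real (card (\<pi> ` Fs (Suc t))) \<le> real (card (\<pi> ` Fs t)) - 1" by linarith
    have "Fs (Suc t) \<noteq> {}" using Ft'(2) Suc.prems k by auto
    then have "kc_cost C d (\<pi> ` Fs (Suc t)) \<le> kc_cost C d (Fs (Suc t)) + r"
      using kc_cost_image_le_kc_cost[OF Ft'(1)] by blast
    also have "\<dots> \<le> kc_cost C d (\<pi> ` Fs t) + 2 * r"
      using greedy_step_kc_cost_le[OF step Ft(1) lt] by simp
    also have "\<dots> \<le> r + 2 * r * (real k - real (card (\<pi> ` Fs t))) + 2 * r"
      using Suc.IH t by simp
    also have "\<dots> = r + 2 * r * (real k - (real (card (\<pi> ` Fs t)) - 1))"
      by (simp add: algebra_simps)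
    also have "\<dots> \<le> r + 2 * r * (real k - real (card (\<pi> ` Fs (Suc t))))"
      using card_drop r by (intro add_left_mono mult_left_mono) auto
    finally show ?thesis .
  qed
qed

end

lemma nearest_center_map:
  assumes "finite C" "Opt \<subseteq> C" "Opt \<noteq> {}"
  obtains \<pi> where "\<And>c. c \<in> C \<Longrightarrow> \<pi> c \<in> Opt" "\<And>c. c \<in> C \<Longrightarrow> d c (\<pi> c) \<le> kc_cost C d Opt"
proof -
  have fin: "finite Opt" using assms finite_subset by blast
  have "\<exists>x\<in>Opt. d c x \<le> kc_cost C d Opt" if "c \<in> C" for c
    using dist_to_attained[OF fin assms(3)] dist_to_le_kc_cost[OF assms(1) that] by metis
  then show ?thesis using that by metis
qed

theorem rev_greedy_kc_cost_le:
  assumes finite: "finite C" and k: "1 \<le> k" "k \<le> card C" and metric: "metric_on C d"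
    and exec: "rev_greedy_exec C d k Fs"
  shows "kc_cost C d (Fs (card C - k)) \<le> 2 * real k * kc_OPT C d k"
proof -
  have "C \<noteq> {}" using k by auto
  then obtain Opt where Opt: "Opt \<subseteq> C" "Opt \<noteq> {}" "card Opt \<le> k"
    and opt: "kc_OPT C d k = kc_cost C d Opt"
    using kc_OPT_attained[OF finite _ k(1)] by metis
  obtain \<pi> where \<pi>: "\<And>c. c \<in> C \<Longrightarrow> \<pi> c \<in> Opt" "\<And>c. c \<in> C \<Longrightarrow> d c (\<pi> c) \<le> kc_OPT C d k"
    using nearest_center_map[OF finite Opt(1,2)] opt by metis
  have \<pi>_into: "\<And>c. c \<in> C \<Longrightarrow> \<pi> c \<in> C" using \<pi>(1) Opt(1) by blast
  have "card (\<pi> ` C) \<le> card Opt" using \<pi>(1) Opt(1) finite finite_subset by (intro card_mono) auto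
  then have card_\<pi>: "card (\<pi> ` C) \<le> k" using Opt(3) by linarith
  define E where "E = Fs (card C - k)"
  have E: "E \<subseteq> C" "card E = k"
    using rev_greedy_exec_subset_card[OF finite exec, of "card C - k"] k unfolding E_def by auto
  then have "E \<noteq> {}" using k by auto
  moreover have "finite E" using E(1) finite finite_subset by blast
  ultimately have card_\<pi>E: "1 \<le> card (\<pi> ` E)" by (simp add: Suc_le_eq card_gt_0_iff)
  have r: "0 \<le> kc_OPT C d k" using radius_nonneg[OF finite metric \<pi>_into \<pi>(2)] \<open>C \<noteq> {}\<close> by blast
  have "kc_cost C d E \<le> kc_cost C d (\<pi> ` E) + kc_OPT C d k"
    using kc_cost_le_kc_cost_image[OF finite metric \<pi>_into \<pi>(2) E(1) \<open>E \<noteq> {}\<close>] .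
  also have "\<dots> \<le> 2 * kc_OPT C d k + 2 * kc_OPT C d k * (real k - real (card (\<pi> ` E)))"
    using rev_greedy_kc_cost_image_bound[OF finite metric \<pi>_into \<pi>(2) exec k card_\<pi>]
    unfolding E_def by simp
  also have "\<dots> \<le> 2 * kc_OPT C d k + 2 * kc_OPT C d k * (real k - 1)"
    using card_\<pi>E r by (intro add_left_mono mult_left_mono) auto
  also have "\<dots> = 2 * real k * kc_OPT C d k" by (simp add: algebra_simps)
  finally show ?thesis unfolding E_def .
qed

section \<open>Relabelling an instance\<close>

context
  fixes C :: "'a set" and d :: "'a \<Rightarrow> 'a \<Rightarrow> real"
    and h :: "'a \<Rightarrow> 'b" and d' :: "'b \<Rightarrow> 'b \<Rightarrow> real"
  assumes inj: "inj_on h C"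
    and iso: "\<And>x y. x \<in> C \<Longrightarrow> y \<in> C \<Longrightarrow> d' (h x) (h y) = d x y"
begin

lemma dist_to_image:
  assumes "F \<subseteq> C" "c \<in> C"
  shows "dist_to d' (h ` F) (h c) = dist_to d F c"
proof -
  have "(\<lambda>f. d' (h c) f) ` h ` F = (\<lambda>f. d c f) ` F"
    unfolding image_image using assms iso by (intro image_cong) auto
  then show ?thesis unfolding dist_to_def by simp
qed

lemma kc_cost_image:
  assumes "F \<subseteq> C"
  shows "kc_cost (h ` C) d' (h ` F) = kc_cost C d F"
proof -
  have "dist_to d' (h ` F) ` h ` C = dist_to d F ` C"
    unfolding image_image using dist_to_image[OF assms] by (intro image_cong) auto
  then show ?thesis unfolding kc_cost_def by simp
qed

lemma kc_OPT_image: "kc_OPT (h ` C) d' k = kc_OPT C d k"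
proof -
  have card: "card (h ` F) = card F" if "F \<subseteq> C" for F
    using card_image inj_on_subset[OF inj that] by blast
  have "{kc_cost (h ` C) d' F' | F'. F' \<subseteq> h ` C \<and> F' \<noteq> {} \<and> card F' \<le> k}
      = {kc_cost C d F | F. F \<subseteq> C \<and> F \<noteq> {} \<and> card F \<le> k}"
  proof (intro set_eqI iffI)
    fix z assume "z \<in> {kc_cost (h ` C) d' F' | F'. F' \<subseteq> h ` C \<and> F' \<noteq> {} \<and> card F' \<le> k}"
    then obtain F where F: "F \<subseteq> C" "z = kc_cost (h ` C) d' (h ` F)" "h ` F \<noteq> {}" "card (h ` F) \<le> k"
      by (auto simp: subset_image_iff)
    then have "z = kc_cost C d F" "F \<noteq> {}" "card F \<le> k" using card kc_cost_image by auto
    then show "z \<in> {kc_cost C d F | F. F \<subseteq> C \<and> F \<noteq> {} \<and> card F \<le> k}"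
      using F(1) by blast
  next
    fix z assume "z \<in> {kc_cost C d F | F. F \<subseteq> C \<and> F \<noteq> {} \<and> card F \<le> k}"
    then obtain F where F: "F \<subseteq> C" "z = kc_cost C d F" "F \<noteq> {}" "card F \<le> k" by blast
    then have "z = kc_cost (h ` C) d' (h ` F)" "h ` F \<subseteq> h ` C" "h ` F \<noteq> {}" "card (h ` F) \<le> k"
      using card kc_cost_image by auto
    then show "z \<in> {kc_cost (h ` C) d' F' | F'. F' \<subseteq> h ` C \<and> F' \<noteq> {} \<and> card F' \<le> k}"
      by blast
  qed
  then show ?thesis unfolding kc_OPT_def by simp
qed

lemma metric_on_image:
  assumes "metric_on C d"
  shows "metric_on (h ` C) d'"
  using assms unfolding metric_on_def by (simp add: iso inj_on_eq_iff[OF inj])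

lemma greedy_step_image:
  assumes "F \<subseteq> C" "greedy_step C d F F'"
  shows "greedy_step (h ` C) d' (h ` F) (h ` F')"
proof -
  have Diff: "h ` (F - {x}) = h ` F - {h x}" if "x \<in> F" for x
    using inj_on_image_set_diff[OF inj, of F "{x}"] assms(1) that by auto
  obtain f where f: "f \<in> F" "F' = F - {f}"
    "\<And>g. g \<in> F \<Longrightarrow> kc_cost C d (F - {f}) \<le> kc_cost C d (F - {g})"
    using assms(2) unfolding greedy_step_def by blast
  show ?thesis unfolding greedy_step_def
  proof (intro bexI conjI ballI)
    show "h ` F' = h ` F - {h f}" using f Diff by simp
    fix g' assume "g' \<in> h ` F"
    then obtain g where g: "g \<in> F" "g' = h g" by blast
    have "kc_cost (h ` C) d' (h ` F - {h x}) = kc_cost C d (F - {x})" if "x \<in> F" for x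
      using Diff[OF that] kc_cost_image[of "F - {x}"] assms(1) by auto
    then show "kc_cost (h ` C) d' (h ` F - {h f}) \<le> kc_cost (h ` C) d' (h ` F - {g'})"
      using f g by simp
  qed (use f in simp)
qed

lemma rev_greedy_exec_image:
  assumes "rev_greedy_exec C d k Fs" "\<And>t. Fs t \<subseteq> C"
  shows "rev_greedy_exec (h ` C) d' k (\<lambda>t. h ` Fs t)"
  using assms greedy_step_image card_image[OF inj] unfolding rev_greedy_exec_iff by simp

end

section \<open>A tight instance\<close>

(* Point (l, p) lies in cluster l, a star of radius 1 around its center (l, l); points of clusters
   l and l' are 2 (l + l') apart plus an offset that vanishes when the second coordinates agree, so
   the spoke (0, p) of cluster 0 serves cluster j at distance about 2 j.  Reverse greedy may first
   delete, at cost 1, everything except the centers (j, j), j >= 1, and the spokes (0, p), p >= 1;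
   then alternately the center (l, l) at cost 2 l and the spoke (0, l) at cost 2 l + 1; and last
   the spoke (0, m + 1), ending with the spokes (0, p), p >= m + 2, of cost 2 m + 2. *)
fun cluster_dist :: "nat \<times> nat \<Rightarrow> nat \<times> nat \<Rightarrow> real" where
  "cluster_dist (l, p) (l', q) =
     (if l = l' then 0 else 2 * real (l + l')) +
     (if p = q then 0 else if p = l \<or> p = l' \<or> q = l \<or> q = l' then 1 else 2)"

definition cluster_points :: "nat \<Rightarrow> (nat \<times> nat) set" where
  "cluster_points m = {(l, p). l \<le> m \<and> l \<le> p \<and> p \<le> 2 * m + 3}"

definition spokes :: "nat \<Rightarrow> nat \<Rightarrow> (nat \<times> nat) set" where
  "spokes m s = (\<lambda>p. (0, p)) ` {s..2 * m + 3}"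

definition centers :: "nat \<Rightarrow> nat \<Rightarrow> (nat \<times> nat) set" where
  "centers m s = (\<lambda>j. (j, j)) ` {s..m}"

lemma mem_cluster_points [simp]: "(l, p) \<in> cluster_points m \<longleftrightarrow> l \<le> m \<and> l \<le> p \<and> p \<le> 2 * m + 3"
  by (simp add: cluster_points_def)

lemma mem_spokes [simp]: "x \<in> spokes m s \<longleftrightarrow> fst x = 0 \<and> s \<le> snd x \<and> snd x \<le> 2 * m + 3"
  by (cases x) (auto simp: spokes_def)

lemma mem_centers [simp]: "x \<in> centers m s \<longleftrightarrow> fst x = snd x \<and> s \<le> fst x \<and> fst x \<le> m"
  by (cases x) (auto simp: centers_def)

lemma finite_cluster_points: "finite (cluster_points m)"
proof -
  have "cluster_points m \<subseteq> {0..m} \<times> {0..2 * m + 3}" by (auto simp: cluster_points_def)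
  then show ?thesis using finite_subset by blast
qed

lemma spokes_subset: "spokes m s \<subseteq> cluster_points m"
  by auto

lemma centers_subset: "centers m s \<subseteq> cluster_points m"
  by auto

lemma card_spokes: "card (spokes m s) = 2 * m + 4 - s"
  unfolding spokes_def by (subst card_image) (auto simp: inj_on_def)

lemma card_centers: "card (centers m s) = m + 1 - s"
  unfolding centers_def by (subst card_image) (auto simp: inj_on_def)

lemma cluster_dist_nonneg: "0 \<le> cluster_dist x y"
  by (cases x, cases y) simp

lemma cluster_dist_commute: "cluster_dist x y = cluster_dist y x"
  by (cases x, cases y) (simp add: add.commute disj_commute)

lemma cluster_dist_eq_0_iff: "cluster_dist x y = 0 \<longleftrightarrow> x = y"
  by (cases x, cases y) (simp split: if_splits)

lemma cluster_dist_triangle: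
  assumes "l1 \<le> p1" "l2 \<le> p2" "l3 \<le> p3"
  shows "cluster_dist (l1, p1) (l3, p3)
           \<le> cluster_dist (l1, p1) (l2, p2) + cluster_dist (l2, p2) (l3, p3)"
  using assms by (simp split: if_splits)

lemma metric_on_cluster_dist: "metric_on (cluster_points m) cluster_dist"
  unfolding metric_on_def
  using cluster_dist_nonneg cluster_dist_commute cluster_dist_eq_0_iff cluster_dist_triangle
  by (auto simp: cluster_points_def)

lemma cluster_dist_ge_one: "x \<noteq> y \<Longrightarrow> 1 \<le> cluster_dist x y"
  by (cases x, cases y) auto

lemma kc_OPT_cluster_points: "kc_OPT (cluster_points m) cluster_dist (m + 2) = 1"
proof (rule antisym)
  have "card (centers m 0) \<le> m + 2" by (simp add: card_centers)
  moreover have "centers m 0 \<noteq> {}" by (auto simp: centers_def)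
  ultimately have "kc_OPT (cluster_points m) cluster_dist (m + 2)
      \<le> kc_cost (cluster_points m) cluster_dist (centers m 0)"
    using kc_OPT_le[OF finite_cluster_points centers_subset] by blast
  also have "\<dots> \<le> 1"
  proof (rule kc_cost_leI[OF finite_cluster_points])
    show "cluster_points m \<noteq> {}" by (auto simp: cluster_points_def)
    show "finite (centers m 0)" using finite_subset[OF centers_subset finite_cluster_points] .
    fix c assume "c \<in> cluster_points m"
    then obtain j p where "c = (j, p)" "j \<le> m" by (cases c) auto
    then show "\<exists>x\<in>centers m 0. cluster_dist c x \<le> 1" by (intro bexI[of _ "(j, j)"]) auto
  qed
  finally show "kc_OPT (cluster_points m) cluster_dist (m + 2) \<le> 1" .
next
  have "card (spokes m 0) \<le> card (cluster_points m)"
    by (rule card_mono[OF finite_cluster_points spokes_subset])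
  then have "m + 2 < card (cluster_points m)" using card_spokes[of m 0] by linarith
  then show "1 \<le> kc_OPT (cluster_points m) cluster_dist (m + 2)"
    using kc_OPT_ge_separation[OF finite_cluster_points, where \<delta>=1 and d=cluster_dist]
      cluster_dist_ge_one
    by simp
qed

lemma greedy_step_outside_core:
  assumes F: "F \<subseteq> cluster_points m" "f \<in> F" "spokes m 1 \<union> centers m 1 \<subseteq> F - {f}"
  shows "greedy_step (cluster_points m) cluster_dist F (F - {f})"
proof (rule greedy_stepI[OF finite_cluster_points F(1,2), where v=1])
  fix c assume "c \<in> cluster_points m"
  then obtain l p where c: "c = (l, p)" "l \<le> m" "l \<le> p" "p \<le> 2 * m + 3" by (cases c) auto
  define x where "x = (if l = 0 then if p = 0 then (0, 2 * m + 3) else c else (l, l))"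
  have "x \<in> spokes m 1 \<union> centers m 1" "cluster_dist c x \<le> 1" using c by (auto simp: x_def)
  then show "\<exists>x\<in>F - {f}. cluster_dist c x \<le> 1" using subsetD[OF F(3)] by blast
next
  fix g assume "g \<in> F" "g \<noteq> f"
  then show "\<exists>c\<in>cluster_points m. \<forall>x\<in>F - {g}. 1 \<le> cluster_dist c x"
    using F(1) by (intro bexI[of _ g] ballI cluster_dist_ge_one) auto
qed

lemma greedy_step_delete_center:
  assumes l: "1 \<le> l" "l \<le> m"
  shows "greedy_step (cluster_points m) cluster_dist
           (spokes m l \<union> centers m l) (spokes m l \<union> centers m (Suc l))"
proof -
  let ?F = "spokes m l \<union> centers m l"
  have F: "?F \<subseteq> cluster_points m" "(l, l) \<in> ?F" using spokes_subset centers_subset l by auto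
  have "greedy_step (cluster_points m) cluster_dist ?F (?F - {(l, l)})"
  proof (rule greedy_stepI[OF finite_cluster_points F, where v="2 * real l"])
    fix c assume "c \<in> cluster_points m"
    then obtain j p where c: "c = (j, p)" "j \<le> m" "j \<le> p" "p \<le> 2 * m + 3" by (cases c) auto
    define x where "x = (if j < l then (0, 2 * m + 3) else if j = l then (0, p) else (j, j))"
    have "x \<in> ?F - {(l, l)}" "cluster_dist c x \<le> 2 * real l" using c l by (auto simp: x_def)
    then show "\<exists>x\<in>?F - {(l, l)}. cluster_dist c x \<le> 2 * real l" by blast
  next
    fix g assume g: "g \<in> ?F" "g \<noteq> (l, l)"
    obtain l' where l': "l = Suc l'" using l(1) by (cases l) auto
    define c where "c = (if fst g = 0 then (l', snd g) else g)"
    have "c \<in> cluster_points m" using g l l' by (cases g) (auto simp: c_def)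
    moreover have "2 * real l \<le> cluster_dist c x" if "x \<in> ?F - {g}" for x
      using g that l l' by (cases g, cases x) (auto simp: c_def)
    ultimately show "\<exists>c\<in>cluster_points m. \<forall>x\<in>?F - {g}. 2 * real l \<le> cluster_dist c x" by blast
  qed
  moreover have "?F - {(l, l)} = spokes m l \<union> centers m (Suc l)" using l by auto
  ultimately show ?thesis by simp
qed

lemma greedy_step_delete_spoke:
  assumes l: "1 \<le> l" "l \<le> m"
  shows "greedy_step (cluster_points m) cluster_dist
           (spokes m l \<union> centers m (Suc l)) (spokes m (Suc l) \<union> centers m (Suc l))"
proof -
  let ?F = "spokes m l \<union> centers m (Suc l)"
  have F: "?F \<subseteq> cluster_points m" "(0, l) \<in> ?F" using spokes_subset centers_subset l by auto
  have "greedy_step (cluster_points m) cluster_dist ?F (?F - {(0, l)})"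
  proof (rule greedy_stepI[OF finite_cluster_points F, where v="2 * real l + 1"])
    fix c assume "c \<in> cluster_points m"
    then obtain j p where c: "c = (j, p)" "j \<le> m" "j \<le> p" "p \<le> 2 * m + 3" by (cases c) auto
    define x where
      "x = (if j < l \<or> (j = l \<and> p = l) then (0, 2 * m + 3) else if j = l then (0, p) else (j, j))"
    have "x \<in> ?F - {(0, l)}" "cluster_dist c x \<le> 2 * real l + 1" using c l by (auto simp: x_def)
    then show "\<exists>x\<in>?F - {(0, l)}. cluster_dist c x \<le> 2 * real l + 1" by blast
  next
    fix g assume g: "g \<in> ?F" "g \<noteq> (0, l)"
    define c where "c = (if fst g = 0 then (l, snd g) else g)"
    have "c \<in> cluster_points m" using g l by (cases g) (auto simp: c_def)
    moreover have "2 * real l + 1 \<le> cluster_dist c x" if "x \<in> ?F - {g}" for x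
      using g that l by (cases g, cases x) (auto simp: c_def)
    ultimately show "\<exists>c\<in>cluster_points m. \<forall>x\<in>?F - {g}. 2 * real l + 1 \<le> cluster_dist c x"
      by blast
  qed
  moreover have "?F - {(0, l)} = spokes m (Suc l) \<union> centers m (Suc l)" using l by auto
  ultimately show ?thesis by simp
qed

lemma greedy_step_delete_last_spoke:
  "greedy_step (cluster_points m) cluster_dist (spokes m (Suc m)) (spokes m (Suc (Suc m)))"
proof -
  have F: "spokes m (Suc m) \<subseteq> cluster_points m" "(0, Suc m) \<in> spokes m (Suc m)"
    using spokes_subset by auto
  have "greedy_step (cluster_points m) cluster_dist
          (spokes m (Suc m)) (spokes m (Suc m) - {(0, Suc m)})"
  proof (rule greedy_stepI[OF finite_cluster_points F, where v="2 * real m + 2"])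
    fix c assume "c \<in> cluster_points m"
    then have "cluster_dist c (0, 2 * m + 3) \<le> 2 * real m + 2" by (cases c) auto
    then show "\<exists>x\<in>spokes m (Suc m) - {(0, Suc m)}. cluster_dist c x \<le> 2 * real m + 2"
      by (intro bexI[of _ "(0, 2 * m + 3)"]) auto
  next
    fix g assume g: "g \<in> spokes m (Suc m)" "g \<noteq> (0, Suc m)"
    have "(m, snd g) \<in> cluster_points m" using g by auto
    moreover have "2 * real m + 2 \<le> cluster_dist (m, snd g) x" if "x \<in> spokes m (Suc m) - {g}" for x
      using g that by (cases g, cases x) auto
    ultimately show
      "\<exists>c\<in>cluster_points m. \<forall>x\<in>spokes m (Suc m) - {g}. 2 * real m + 2 \<le> cluster_dist c x"
      by blast
  qed
  moreover have "spokes m (Suc m) - {(0, Suc m)} = spokes m (Suc (Suc m))" by auto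
  ultimately show ?thesis by simp
qed

lemma kc_cost_last_spokes:
  "kc_cost (cluster_points m) cluster_dist (spokes m (Suc (Suc m))) = 2 * real m + 2"
proof (rule antisym)
  have ne: "cluster_points m \<noteq> {}" by (auto simp: cluster_points_def)
  have fin: "finite (spokes m (Suc (Suc m)))" by (simp add: spokes_def)
  show "kc_cost (cluster_points m) cluster_dist (spokes m (Suc (Suc m))) \<le> 2 * real m + 2"
  proof (rule kc_cost_leI[OF finite_cluster_points ne fin])
    fix c assume "c \<in> cluster_points m"
    then have "cluster_dist c (0, 2 * m + 3) \<le> 2 * real m + 2" by (cases c) auto
    then show "\<exists>x\<in>spokes m (Suc (Suc m)). cluster_dist c x \<le> 2 * real m + 2"
      by (intro bexI[of _ "(0, 2 * m + 3)"]) auto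
  qed
  have "spokes m (Suc (Suc m)) \<noteq> {}" by (auto simp: spokes_def)
  moreover have "2 * real m + 2 \<le> cluster_dist (m, Suc m) x" if "x \<in> spokes m (Suc (Suc m))" for x
    using that by (cases x) auto
  ultimately show
    "2 * real m + 2 \<le> kc_cost (cluster_points m) cluster_dist (spokes m (Suc (Suc m)))"
    using kc_cost_geI[OF finite_cluster_points _ fin, of "(m, Suc m)"] by simp
qed

(* stage m (2 l - 2) = spokes m l \<union> centers m l,  stage m (2 l - 1) = spokes m l \<union> centers m (l + 1) *)
definition stage :: "nat \<Rightarrow> nat \<Rightarrow> (nat \<times> nat) set" where
  "stage m j = spokes m (j div 2 + 1) \<union> centers m ((j + 1) div 2 + 1)"

lemma greedy_step_stage:
  assumes "j < 2 * m"
  shows "greedy_step (cluster_points m) cluster_dist (stage m j) (stage m (Suc j))"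
proof (cases "even j")
  case True
  then obtain q where "j = 2 * q" by blast
  then show ?thesis using greedy_step_delete_center[of "Suc q" m] assms by (simp add: stage_def)
next
  case False
  then obtain q where "j = 2 * q + 1" by (blast elim: oddE)
  then show ?thesis using greedy_step_delete_spoke[of "Suc q" m] assms by (simp add: stage_def)
qed

lemma card_stage_0: "card (stage m 0) = 3 * m + 3"
proof -
  have "spokes m 1 \<inter> centers m 1 = {}" by auto
  then have "card (stage m 0) = card (spokes m 1) + card (centers m 1)"
    unfolding stage_def by (simp add: card_Un_disjoint spokes_def centers_def)
  then show ?thesis by (simp add: card_spokes card_centers)
qed

lemma stage_2m: "stage m (2 * m) = spokes m (Suc m)"
  by (auto simp: stage_def)

lemma greedy_step_take_outside_core:
  assumes xs: "distinct xs" "set xs = cluster_points m - stage m 0" and i: "i < length xs"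
  shows "greedy_step (cluster_points m) cluster_dist
           (cluster_points m - set (take i xs)) (cluster_points m - set (take (Suc i) xs))"
proof -
  let ?F = "cluster_points m - set (take i xs)"
  have "xs ! i \<in> set (drop i xs)" using Cons_nth_drop_Suc[OF i] by (metis list.set_intros(1))
  then have "xs ! i \<notin> set (take i xs)"
    using set_take_disj_set_drop_if_distinct[OF xs(1), of i i] by blast
  moreover have "xs ! i \<in> cluster_points m" using nth_mem[OF i] xs(2) by blast
  ultimately have f: "xs ! i \<in> ?F" by blast
  have Diff: "?F - {xs ! i} = cluster_points m - set (take (Suc i) xs)"
    using take_Suc_conv_app_nth[OF i] by auto
  have "set (take (Suc i) xs) \<subseteq> cluster_points m - stage m 0"
    using set_take_subset xs(2) by metis
  then have "stage m 0 \<subseteq> ?F - {xs ! i}"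
    unfolding Diff using spokes_subset centers_subset by (auto simp: stage_def)
  then have "greedy_step (cluster_points m) cluster_dist ?F (?F - {xs ! i})"
    by (intro greedy_step_outside_core f) (auto simp: stage_def)
  then show ?thesis unfolding Diff .
qed

lemma rev_greedy_exec_cluster_points:
  obtains Fs where "rev_greedy_exec (cluster_points m) cluster_dist (m + 2) Fs"
    "\<And>t. Fs t \<subseteq> cluster_points m"
    "Fs (card (cluster_points m) - (m + 2)) = spokes m (Suc (Suc m))"
proof -
  obtain xs where xs: "distinct xs" "set xs = cluster_points m - stage m 0"
    using finite_distinct_list[of "cluster_points m - stage m 0"] finite_cluster_points by blast
  define a where "a = length xs"
  define Fs where "Fs t = (if t \<le> a then cluster_points m - set (take t xs)
      else if t \<le> a + 2 * m then stage m (t - a) else spokes m (Suc (Suc m)))" for t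
  have core: "stage m 0 \<subseteq> cluster_points m"
    using spokes_subset centers_subset by (auto simp: stage_def)
  have "card (cluster_points m) = card (cluster_points m - stage m 0) + card (stage m 0)"
    using card_Diff_subset[OF finite_subset[OF core finite_cluster_points] core]
      card_mono[OF finite_cluster_points core] by simp
  then have n: "card (cluster_points m) - (m + 2) = a + 2 * m + 1"
    using distinct_card[OF xs(1)] xs(2) card_stage_0[of m] unfolding a_def by simp
  have Fs_stage: "Fs t = stage m (t - a)" if "a \<le> t" "t \<le> a + 2 * m" for t
  proof (cases "t = a")
    case True
    then show ?thesis using xs(2) core by (auto simp: Fs_def a_def)
  qed (use that in \<open>simp add: Fs_def\<close>)
  have "greedy_step (cluster_points m) cluster_dist (Fs i) (Fs (Suc i))"
    if i: "i < a + 2 * m + 1" for i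
  proof -
    consider "i < a" | "a \<le> i" "i < a + 2 * m" | "i = a + 2 * m" using i by linarith
    then show ?thesis
    proof cases
      case 1
      then show ?thesis using greedy_step_take_outside_core[OF xs, of i] by (simp add: Fs_def a_def)
    next
      case 2
      then show ?thesis using greedy_step_stage[of "i - a" m] Fs_stage[of i] Fs_stage[of "Suc i"]
        by (simp add: Suc_diff_le)
    next
      case 3
      then show ?thesis using greedy_step_delete_last_spoke[of m] Fs_stage[of i] stage_2m[of m]
        by (simp add: Fs_def)
    qed
  qed
  then have "rev_greedy_exec (cluster_points m) cluster_dist (m + 2) Fs"
    unfolding rev_greedy_exec_iff n by (simp add: Fs_def)
  moreover have "Fs t \<subseteq> cluster_points m" for t
    using core spokes_subset by (auto simp: Fs_def stage_def)
  moreover have "Fs (card (cluster_points m) - (m + 2)) = spokes m (Suc (Suc m))"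
    unfolding n Fs_def by simp
  ultimately show ?thesis using that by blast
qed

lemma rev_greedy_lower_bound_instance:
  assumes "1 \<le> k"
  shows "\<exists>(C :: nat set) d Fs. finite C \<and> k \<le> card C \<and> metric_on C d \<and>
           rev_greedy_exec C d k Fs \<and>
           kc_cost C d (Fs (card C - k)) = (2 * real k - 2) * kc_OPT C d k \<and>
           (2 \<le> k \<longrightarrow> kc_OPT C d k > 0)"
proof (cases "k = 1")
  case True
  have "rev_greedy_exec {0} (\<lambda>_ _. 0) 1 (\<lambda>_. {0 :: nat})" by (simp add: rev_greedy_exec_def)
  moreover have "kc_cost {0} (\<lambda>_ _. 0) {0 :: nat} = 0" by (simp add: kc_cost_def dist_to_def)
  ultimately show ?thesis
    using True by (intro exI[of _ "{0}"] exI[of _ "\<lambda>_ _. 0"] exI) (simp add: metric_on_def)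
next
  case False
  define m where "m = k - 2"
  have k: "k = m + 2" using assms False unfolding m_def by simp
  obtain Fs where Fs: "rev_greedy_exec (cluster_points m) cluster_dist (m + 2) Fs"
    "\<And>t. Fs t \<subseteq> cluster_points m"
    "Fs (card (cluster_points m) - (m + 2)) = spokes m (Suc (Suc m))"
    using rev_greedy_exec_cluster_points[of m] by blast
  let ?C = "prod_encode ` cluster_points m"
  define d where "d x y = cluster_dist (prod_decode x) (prod_decode y)" for x y
  have inj: "inj_on prod_encode (cluster_points m)" by (rule inj_prod_encode)
  have iso: "\<And>x y. x \<in> cluster_points m \<Longrightarrow> y \<in> cluster_points m \<Longrightarrow>
      d (prod_encode x) (prod_encode y) = cluster_dist x y"
    by (simp add: d_def)
  have card: "card ?C = card (cluster_points m)" using card_image[OF inj] .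
  have "card (spokes m 0) \<le> card (cluster_points m)"
    by (rule card_mono[OF finite_cluster_points spokes_subset])
  then have "k \<le> card ?C" using card card_spokes[of m 0] k by simp
  moreover have "metric_on ?C d" using metric_on_image[OF inj iso metric_on_cluster_dist] .
  moreover have "rev_greedy_exec ?C d k (\<lambda>t. prod_encode ` Fs t)"
    using rev_greedy_exec_image[OF inj iso Fs(1,2)] k by simp
  moreover have "kc_OPT ?C d k = 1"
    using kc_OPT_image[OF inj, where d=cluster_dist and d'=d, OF iso] kc_OPT_cluster_points k
    by simp
  moreover have "kc_cost ?C d (prod_encode ` Fs (card ?C - k)) = 2 * real m + 2"
    using kc_cost_image[OF inj, where d=cluster_dist and d'=d,
        OF iso Fs(2)[of "card (cluster_points m) - (m + 2)"]] Fs(3) kc_cost_last_spokes card k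
    by simp
  ultimately show ?thesis using finite_cluster_points k
    by (intro exI[of _ ?C] exI[of _ d] exI[of _ "\<lambda>t. prod_encode ` Fs t"]) simp
qed

theorem theorem1:
  shows "(\<forall>(C :: 'a set) d k Fs. finite C \<and> 1 \<le> k \<and> k \<le> card C \<and> metric_on C d \<and>
            rev_greedy_exec C d k Fs \<longrightarrow>
            kc_cost C d (Fs (card C - k)) \<le> 2 * real k * kc_OPT C d k)
       \<and> (\<forall>k::nat. 1 \<le> k \<longrightarrow>
            (\<exists>(C :: nat set) d Fs. finite C \<and> k \<le> card C \<and> metric_on C d \<and>
               rev_greedy_exec C d k Fs \<and>
               kc_cost C d (Fs (card C - k)) = (2 * real k - 2) * kc_OPT C d k \<and>
               (2 \<le> k \<longrightarrow> kc_OPT C d k > 0)))"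
  using rev_greedy_kc_cost_le rev_greedy_lower_bound_instance by blast

end
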